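(* Let $\{\alpha_k\}$ be the stepsize sequence generated by Algorithm 1 or Algorithm 2 (described in the context) under the Standing Assumption and Matrix Assumption of the context, and suppose the algorithm does not terminate finitely. Then there exists $\alpha_{\min}>0$ such that $\alpha_k\ge\alpha_{\min}$ for all $k\in\mathbb{N}$.
   Context: Notation: $g_k=\nabla f(x_k)$, $c_k=c(x_k)$, $J_k=\nabla c(x_k)^T$; $\phi(x,\tau)=\tau f(x)+\|c(x)\|_1$; $\Delta q(x,\tau,g,H,d)=-\tau(g^Td+\frac12\max\{d^THd,0\})+\|c(x)\|_1$. Matrix Assumption: symmetric $H_k$ with $\|H_k\|_2\le\kappa_H$ and $u^TH_ku\ge\zeta\|u\|_2^2$ whenever $J_ku=0$. Common iteration: $(d_k,y_k)$ solves $H_kd_k+J_k^Ty_k=-g_k$, $J_kd_k=-c_k$; stop if $g_k+J_k^Ty_k=0$ and $c_k=0$. $\tau_k^{trial}=\infty$ if $g_k^Td_k+\max\{d_k^TH_kd_k,0\}\le0$, else $\frac{(1-\sigma)\|c_k\|_1}{g_k^Td_k+\max\{d_k^TH_kd_k,0\}}$; $\tau_k=\tau_{k-1}$ if $\tau_{k-1}\le\tau_k^{trial}$, else $(1-\epsilon)\tau_k^{trial}$ (with $\tau_{-1}>0$, $\epsilon,\sigma\in(0,1)$); $x_{k+1}=x_k+\alpha_kd_k$. (SD) for trial $\alpha$: $\phi(x_k+\alpha d_k,\tau_k)\le\phi(x_k,\tau_k)-\eta\alpha\Delta q(x_k,\tau_k,g_k,H_k,d_k)$, $\eta\in(0,1)$.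 Algorithm 1 (inputs also $\rho>1$, $L_{-1}>0$, $\gamma_{-1,i}>0$): choose $L_{k,0}\in(0,L_{k-1}]$, $\gamma_{k,i,0}\in(0,\gamma_{k-1,i}]$; for $j=0,1,\dots$ with $\Lambda_{k,j}=\tau_kL_{k,j}+\sum_i\gamma_{k,i,j}$: $\widehat\alpha_{k,j}=\frac{2(1-\eta)\Delta q(x_k,\tau_k,g_k,H_k,d_k)}{\Lambda_{k,j}\|d_k\|_2^2}$, $\widetilde\alpha_{k,j}=\widehat\alpha_{k,j}-\frac{4\|c_k\|_1}{\Lambda_{k,j}\|d_k\|_2^2}$; $\alpha_{k,j}=\widehat\alpha_{k,j}$ if $\widehat\alpha_{k,j}<1$, $1$ if $\widetilde\alpha_{k,j}\le1\le\widehat\alpha_{k,j}$, $\widetilde\alpha_{k,j}$ if $\widetilde\alpha_{k,j}>1$; accept ($\alpha_k=\alpha_{k,j}$, $L_k=L_{k,j}$, $\gamma_{k,i}=\gamma_{k,i,j}$) if (SD) holds or if both $f(x_k+\alpha_{k,j}d_k)\le f(x_k)+\alpha_{k,j}g_k^Td_k+\frac12L_{k,j}\alpha_{k,j}^2\|d_k\|_2^2$ (LF) and $|c_i(x_k+\alpha_{k,j}d_k)|\le|c_i(x_k)+\alpha_{k,j}\nabla c_i(x_k)^Td_k|+\frac12\gamma_{k,i,j}\alpha_{k,j}^2\|d_k\|_2^2$ (LC$_i$) for all $i$; otherwise multiply $L_{k,j}$ by $\rho$ if (LF) fails and $\gamma_{k,i,j}$ by $\rho$ if (LC$_i$) fails.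 Algorithm 2 (inputs also $\nu\in(0,1)$, $\alpha>0$): $\alpha_k=\nu^j\alpha$ for the smallest $j\ge0$ such that (SD) holds. Standing Assumption: an open convex set $\mathcal X$ contains all iterates and trial points $x_k+\alpha_{k,j}d_k$; $f$ is $C^1$, bounded below on $\mathcal X$, $\nabla f$ bounded and $L$-Lipschitz on $\mathcal X$; $c$, $\nabla c^T$ bounded on $\mathcal X$; $\nabla c_i$ is $\gamma_i$-Lipschitz on $\mathcal X$; singular values of $\nabla c(x)^T$ bounded away from zero uniformly over $\mathcal X$. *)

theory Defs
  imports "HOL-Analysis.Analysis"
begin

text \<open>The Jacobian J(x) = nabla c(x)^T is a real^'n^'m matrix whose i-th row is nabla c_i(x).\<close>

definition l1norm :: "real^'m \<Rightarrow> real" where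
  "l1norm v = (\<Sum>i\<in>UNIV. \<bar>v $ i\<bar>)"

definition merit :: "(real^'n \<Rightarrow> real) \<Rightarrow> (real^'n \<Rightarrow> real^'m) \<Rightarrow> real^'n \<Rightarrow> real \<Rightarrow> real" where
  "merit f c x tau = tau * f x + l1norm (c x)"

definition Delta_q :: "real^'m \<Rightarrow> real \<Rightarrow> real^'n \<Rightarrow> real^'n^'n \<Rightarrow> real^'n \<Rightarrow> real" where
  "Delta_q cx tau g H d = - tau * (g \<bullet> d + (1/2) * max (d \<bullet> (H *v d)) 0) + l1norm cx"

text \<open>Merit parameter update: tau_k from tau_{k-1}; trial value is infinite when
  g^T d + max(d^T H d,0) <= 0.\<close>
definition tau_update :: "real \<Rightarrow> real \<Rightarrow> real \<Rightarrow> real^'m \<Rightarrow> real^'n \<Rightarrow> real^'n^'n \<Rightarrow> real^'n \<Rightarrow> real" where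
  "tau_update sgm eps tau_prev cx g H d =
     (let s = g \<bullet> d + max (d \<bullet> (H *v d)) 0 in
      if s \<le> 0 then tau_prev
      else (let tr = (1 - sgm) * l1norm cx / s in
            if tau_prev \<le> tr then tau_prev else (1 - eps) * tr))"

definition SD_cond :: "(real^'n \<Rightarrow> real) \<Rightarrow> (real^'n \<Rightarrow> real^'n) \<Rightarrow> (real^'n \<Rightarrow> real^'m)
   \<Rightarrow> real \<Rightarrow> real^'n \<Rightarrow> real^'n \<Rightarrow> real^'n^'n \<Rightarrow> real \<Rightarrow> real \<Rightarrow> bool" where
  "SD_cond f gf c eta xk dk Hk tauk a \<longleftrightarrow>
     merit f c (xk + a *\<^sub>R dk) tauk
       \<le> merit f c xk tauk - eta * a * Delta_q (c xk) tauk (gf xk) Hk dk"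

text \<open>Common iteration (the part shared by both algorithms), given the stepsizes alpha.\<close>
definition common_iteration ::
  "(real^'n \<Rightarrow> real) \<Rightarrow> (real^'n \<Rightarrow> real^'n) \<Rightarrow> (real^'n \<Rightarrow> real^'m) \<Rightarrow> (real^'n \<Rightarrow> real^'n^'m)
   \<Rightarrow> real \<Rightarrow> real \<Rightarrow> real
   \<Rightarrow> (nat \<Rightarrow> real^'n) \<Rightarrow> (nat \<Rightarrow> real^'n^'n) \<Rightarrow> (nat \<Rightarrow> real^'n) \<Rightarrow> (nat \<Rightarrow> real^'m)
   \<Rightarrow> (nat \<Rightarrow> real) \<Rightarrow> (nat \<Rightarrow> real) \<Rightarrow> bool" where
  "common_iteration f gf c Jc tau_m1 sgm eps x H d y tau alpha \<longleftrightarrow>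
     (\<forall>k. H k *v d k + transpose (Jc (x k)) *v y k = - gf (x k)
          \<and> Jc (x k) *v d k = - c (x k)
          \<and> tau k = tau_update sgm eps (if k = 0 then tau_m1 else tau (k - 1))
                       (c (x k)) (gf (x k)) (H k) (d k)
          \<and> x (Suc k) = x k + alpha k *\<^sub>R d k)"

definition alg1_step :: "real \<Rightarrow> real \<Rightarrow> real \<Rightarrow> real \<Rightarrow> real \<Rightarrow> real" where
  "alg1_step eta dq c1 Lam nd2 =
     (let ah = 2 * (1 - eta) * dq / (Lam * nd2);
          atl = ah - 4 * c1 / (Lam * nd2)
      in if ah < 1 then ah else if atl \<le> 1 \<and> 1 \<le> ah then 1 else atl)"

definition LF_cond :: "(real^'n \<Rightarrow> real) \<Rightarrow> (real^'n \<Rightarrow> real^'n) \<Rightarrow> real^'n \<Rightarrow> real^'n \<Rightarrow> real \<Rightarrow> real \<Rightarrow> bool" where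
  "LF_cond f gf xk dk L a \<longleftrightarrow>
     f (xk + a *\<^sub>R dk) \<le> f xk + a * (gf xk \<bullet> dk) + (1/2) * L * a\<^sup>2 * (norm dk)\<^sup>2"

definition LC_cond :: "(real^'n \<Rightarrow> real^'m) \<Rightarrow> (real^'n \<Rightarrow> real^'n^'m) \<Rightarrow> real^'n \<Rightarrow> real^'n \<Rightarrow> 'm \<Rightarrow> real \<Rightarrow> real \<Rightarrow> bool" where
  "LC_cond c Jc xk dk i gam a \<longleftrightarrow>
     \<bar>c (xk + a *\<^sub>R dk) $ i\<bar> \<le> \<bar>c xk $ i + a * ((Jc xk $ i) \<bullet> dk)\<bar> + (1/2) * gam * a\<^sup>2 * (norm dk)\<^sup>2"

text \<open>Algorithm 1: Lk k j = L_{k,j}, Gk k j $ i = gamma_{k,i,j}, jacc k = the index j at which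
  the inner loop of iteration k accepts. All trial points lie in X.\<close>
definition alg1_run ::
  "(real^'n \<Rightarrow> real) \<Rightarrow> (real^'n \<Rightarrow> real^'n) \<Rightarrow> (real^'n \<Rightarrow> real^'m) \<Rightarrow> (real^'n \<Rightarrow> real^'n^'m)
   \<Rightarrow> (real^'n) set \<Rightarrow> real
   \<Rightarrow> (nat \<Rightarrow> real^'n) \<Rightarrow> (nat \<Rightarrow> real^'n^'n) \<Rightarrow> (nat \<Rightarrow> real^'n)
   \<Rightarrow> (nat \<Rightarrow> real) \<Rightarrow> (nat \<Rightarrow> real) \<Rightarrow> bool" where
  "alg1_run f gf c Jc X eta x H d tau alpha \<longleftrightarrow>
   (\<exists>(rho::real) (L_m1::real) (gam_m1::real^'m)
      (Lk::nat \<Rightarrow> nat \<Rightarrow> real) (Gk::nat \<Rightarrow> nat \<Rightarrow> real^'m) (jacc::nat \<Rightarrow> nat).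
     1 < rho \<and> 0 < L_m1 \<and> (\<forall>i. 0 < gam_m1 $ i) \<and>
     (let Lam = (\<lambda>k j. tau k * Lk k j + (\<Sum>i\<in>UNIV. Gk k j $ i));
          akj = (\<lambda>k j. alg1_step eta (Delta_q (c (x k)) (tau k) (gf (x k)) (H k) (d k))
                          (l1norm (c (x k))) (Lam k j) ((norm (d k))\<^sup>2));
          LF = (\<lambda>k j. LF_cond f gf (x k) (d k) (Lk k j) (akj k j));
          LC = (\<lambda>k j i. LC_cond c Jc (x k) (d k) i (Gk k j $ i) (akj k j));
          acc = (\<lambda>k j. SD_cond f gf c eta (x k) (d k) (H k) (tau k) (akj k j)
                        \<or> (LF k j \<and> (\<forall>i. LC k j i)))
      in
       (0 < Lk 0 0 \<and> Lk 0 0 \<le> L_m1) \<and>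
       (\<forall>i. 0 < Gk 0 0 $ i \<and> Gk 0 0 $ i \<le> gam_m1 $ i) \<and>
       (\<forall>k. 0 < Lk (Suc k) 0 \<and> Lk (Suc k) 0 \<le> Lk k (jacc k)) \<and>
       (\<forall>k i. 0 < Gk (Suc k) 0 $ i \<and> Gk (Suc k) 0 $ i \<le> Gk k (jacc k) $ i) \<and>
       (\<forall>k j. j < jacc k \<longrightarrow>
           \<not> acc k j
           \<and> Lk k (Suc j) = (if LF k j then Lk k j else rho * Lk k j)
           \<and> (\<forall>i. Gk k (Suc j) $ i = (if LC k j i then Gk k j $ i else rho * Gk k j $ i))) \<and>
       (\<forall>k. acc k (jacc k) \<and> alpha k = akj k (jacc k)) \<and>
       (\<forall>k j. j \<le> jacc k \<longrightarrow> x k + akj k j *\<^sub>R d k \<in> X)))"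

definition alg2_run ::
  "(real^'n \<Rightarrow> real) \<Rightarrow> (real^'n \<Rightarrow> real^'n) \<Rightarrow> (real^'n \<Rightarrow> real^'m)
   \<Rightarrow> (real^'n) set \<Rightarrow> real
   \<Rightarrow> (nat \<Rightarrow> real^'n) \<Rightarrow> (nat \<Rightarrow> real^'n^'n) \<Rightarrow> (nat \<Rightarrow> real^'n)
   \<Rightarrow> (nat \<Rightarrow> real) \<Rightarrow> (nat \<Rightarrow> real) \<Rightarrow> bool" where
  "alg2_run f gf c X eta x H d tau alpha \<longleftrightarrow>
   (\<exists>(nu::real) (abar::real) (jacc::nat \<Rightarrow> nat).
      0 < nu \<and> nu < 1 \<and> 0 < abar \<and>
      (\<forall>k. alpha k = nu ^ jacc k * abar
           \<and> SD_cond f gf c eta (x k) (d k) (H k) (tau k) (nu ^ jacc k * abar)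
           \<and> (\<forall>j < jacc k. \<not> SD_cond f gf c eta (x k) (d k) (H k) (tau k) (nu ^ j * abar))
           \<and> (\<forall>j \<le> jacc k. x k + (nu ^ j * abar) *\<^sub>R d k \<in> X)))"

end

(*
  The stepsize is bounded below as soon as the model reduction Delta q_k dominates ||d_k||^2
  uniformly in k.  Write d_k = u + v with J_k u = 0 and ||v|| <= ||c_k|| / s, where s bounds the
  singular values of J_k^T from below.  Since u^T H_k d_k = - g_k^T u, the curvature of H_k on the
  null space bounds u, so g_k^T d_k + max(d_k^T H_k d_k, 0) = O(||c_k||_1) and the merit parameter
  never drops below some tau_min > 0.  Moreover either d_k^T H_k d_k >= (zeta/8) ||d_k||^2 (u
  dominates) or ||d_k||^2 = O(||c_k||_1) (v dominates); in both cases Delta q_k >= kappa ||d_k||^2.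

  Lipschitz continuity of the gradients gives, for alpha <= 1,
    phi(x_k + alpha d_k, tau_k) <= phi(x_k, tau_k) - alpha Delta q_k
                                   + (tau_k L + sum_i gamma_i) alpha^2 ||d_k||^2 / 2,
  so (SD) holds for every alpha below a threshold independent of k.  Backtracking (Algorithm 2)
  therefore stops above nu times this threshold.  In Algorithm 1 an estimate L_{k,j} or
  gamma_{k,i,j} is only increased while it is below the true Lipschitz constant, so Lambda_{k,j}
  stays bounded and alpha_k >= min{1, 2 (1 - eta) kappa / Lambda_max}.
*)

theory Submission
  imports Defs
begin

section \<open>Lipschitz gradients\<close>

lemma lipschitz_gradient_taylor_bound:
  fixes F :: "'a::real_inner \<Rightarrow> real" and DF :: "'a \<Rightarrow> 'a"
  assumes X: "convex X" "open X"
    and der: "\<forall>z\<in>X. (F has_derivative (\<lambda>h. DF z \<bullet> h)) (at z)"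
    and lip: "L-lipschitz_on X DF"
    and x: "x \<in> X" and xe: "x + e \<in> X"
  shows "\<bar>F (x + e) - F x - DF x \<bullet> e\<bar> \<le> L / 2 * (norm e)\<^sup>2"
proof -
  have segment: "x + t *\<^sub>R e \<in> X" if "0 \<le> t" "t \<le> 1" for t
    using convexD_alt[OF X(1) x xe that] by (simp add: algebra_simps)
  have D: "((\<lambda>t. F (x + t *\<^sub>R e)) has_real_derivative (DF (x + t *\<^sub>R e) \<bullet> e)) (at t)"
    if "0 \<le> t" "t \<le> 1" for t
  proof -
    have "((\<lambda>t. x + t *\<^sub>R e) has_derivative (\<lambda>s. s *\<^sub>R e)) (at t)"
      by (auto intro!: derivative_eq_intros)
    moreover have "(F has_derivative (\<lambda>h. DF (x + t *\<^sub>R e) \<bullet> h)) (at (x + t *\<^sub>R e))"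
      using der segment[OF that] by blast
    ultimately have "((\<lambda>t. F (x + t *\<^sub>R e)) has_derivative (\<lambda>s. DF (x + t *\<^sub>R e) \<bullet> (s *\<^sub>R e)))
      (at t)"
      by (rule has_derivative_compose)
    then show ?thesis by (simp add: has_field_derivative_def mult.commute[of _ "DF _ \<bullet> e"])
  qed
  have slope: "\<bar>DF (x + t *\<^sub>R e) \<bullet> e - DF x \<bullet> e\<bar> \<le> L * t * (norm e)\<^sup>2" if "0 \<le> t" "t \<le> 1" for t
  proof -
    have "\<bar>DF (x + t *\<^sub>R e) \<bullet> e - DF x \<bullet> e\<bar> \<le> norm (DF (x + t *\<^sub>R e) - DF x) * norm e"
      unfolding inner_diff_left[symmetric] by (rule Cauchy_Schwarz_ineq2)
    also have "\<dots> \<le> L * norm (t *\<^sub>R e) * norm e"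
      using lipschitz_onD[OF lip segment[OF that] x] by (simp add: dist_norm mult_right_mono)
    finally show ?thesis using that by (simp add: power2_eq_square mult.assoc)
  qed
  define p where "p t = F (x + t *\<^sub>R e) - t * (DF x \<bullet> e) - L / 2 * t\<^sup>2 * (norm e)\<^sup>2" for t
  define q where "q t = F (x + t *\<^sub>R e) - t * (DF x \<bullet> e) + L / 2 * t\<^sup>2 * (norm e)\<^sup>2" for t
  have "p 1 \<le> p 0"
  proof (rule DERIV_nonpos_imp_nonincreasing[of 0 1])
    fix t :: real assume t: "0 \<le> t" "t \<le> 1"
    have "(p has_real_derivative (DF (x + t *\<^sub>R e) \<bullet> e - DF x \<bullet> e - L * t * (norm e)\<^sup>2)) (at t)"
      unfolding p_def by (rule derivative_eq_intros D[OF t] refl | simp)+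
    with slope[OF t] show "\<exists>y. (p has_real_derivative y) (at t) \<and> y \<le> 0" by force
  qed simp
  moreover have "q 0 \<le> q 1"
  proof (rule DERIV_nonneg_imp_nondecreasing[of 0 1])
    fix t :: real assume t: "0 \<le> t" "t \<le> 1"
    have "(q has_real_derivative (DF (x + t *\<^sub>R e) \<bullet> e - DF x \<bullet> e + L * t * (norm e)\<^sup>2)) (at t)"
      unfolding q_def by (rule derivative_eq_intros D[OF t] refl | simp)+
    with slope[OF t] show "\<exists>y. (q has_real_derivative y) (at t) \<and> 0 \<le> y" by force
  qed simp
  ultimately show ?thesis unfolding p_def q_def abs_le_iff by simp
qed

lemma lipschitz_gradient_step_bounds:
  fixes F :: "'a::real_inner \<Rightarrow> real" and DF :: "'a \<Rightarrow> 'a"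
  assumes X: "convex X" "open X"
    and der: "\<forall>z\<in>X. (F has_derivative (\<lambda>h. DF z \<bullet> h)) (at z)"
    and lip: "L-lipschitz_on X DF"
    and x: "x \<in> X" "x + a *\<^sub>R d \<in> X"
  shows "F (x + a *\<^sub>R d) \<le> F x + a * (DF x \<bullet> d) + (1/2) * L * a\<^sup>2 * (norm d)\<^sup>2"
    and "\<bar>F (x + a *\<^sub>R d)\<bar> \<le> \<bar>F x + a * (DF x \<bullet> d)\<bar> + (1/2) * L * a\<^sup>2 * (norm d)\<^sup>2"
proof -
  have "\<bar>F (x + a *\<^sub>R d) - (F x + a * (DF x \<bullet> d))\<bar> \<le> (1/2) * L * a\<^sup>2 * (norm d)\<^sup>2"
    using lipschitz_gradient_taylor_bound[OF X der lip x]
    by (simp add: power_mult_distrib algebra_simps)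
  then show "F (x + a *\<^sub>R d) \<le> F x + a * (DF x \<bullet> d) + (1/2) * L * a\<^sup>2 * (norm d)\<^sup>2"
    and "\<bar>F (x + a *\<^sub>R d)\<bar> \<le> \<bar>F x + a * (DF x \<bullet> d)\<bar> + (1/2) * L * a\<^sup>2 * (norm d)\<^sup>2"
    by linarith+
qed

lemma has_derivative_component_matrix_vector:
  fixes c :: "real^'n \<Rightarrow> real^'m" and J :: "real^'n^'m"
  assumes "(c has_derivative (\<lambda>h. J *v h)) (at z)"
  shows "((\<lambda>z. c z $ i) has_derivative (\<lambda>h. J $ i \<bullet> h)) (at z)"
  using bounded_linear.has_derivative[OF bounded_linear_vec_nth[of i] assms]
  by (simp add: matrix_vector_mul_component)

section \<open>Decomposition of the step\<close>

lemma matrix_min_norm_preimage: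
  fixes J :: "real^'n^'m" and c :: "real^'m"
  assumes s: "0 < s" and sv: "\<forall>w. s * norm w \<le> norm (transpose J *v w)"
  obtains v where "J *v v = c" and "s * norm v \<le> norm c"
proof -
  let ?f = "\<lambda>w. J *v (transpose J *v w)"
  have lin: "linear ?f"
    by (rule linear_compose[OF matrix_vector_mul_linear matrix_vector_mul_linear, unfolded o_def])
  have "inj ?f"
    unfolding linear_injective_0[OF lin]
  proof (intro allI impI)
    fix w assume "?f w = 0"
    then have "(transpose J *v w) \<bullet> (transpose J *v w) = 0" by (simp add: dot_lmul_matrix)
    then have "s * norm w \<le> 0" using sv by (metis inner_eq_zero_iff norm_zero)
    then show "w = 0" using s by (simp add: mult_le_0_iff)
  qed
  then obtain w where w: "?f w = c"
    using linear_injective_imp_surjective[OF lin] by (metis surjD)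
  define v where "v = transpose J *v w"
  have "(norm v)\<^sup>2 = w \<bullet> c" using w by (simp add: v_def dot_lmul_matrix power2_norm_eq_inner)
  also have "\<dots> \<le> norm w * norm c" by (rule order_trans[OF abs_ge_self Cauchy_Schwarz_ineq2])
  finally have vw: "(norm v)\<^sup>2 \<le> norm w * norm c" .
  have "s * norm v \<le> norm c"
  proof (cases "v = 0")
    case False
    have "norm v * (s * norm v) = s * (norm v)\<^sup>2" by (simp add: power2_eq_square)
    also have "\<dots> \<le> s * norm w * norm c" using vw s by (simp add: mult.assoc)
    also have "\<dots> \<le> norm v * norm c" using sv by (simp add: v_def mult_right_mono)
    finally show ?thesis using False by simp
  qed simp
  with w show thesis by (intro that[of v]) (simp_all add: v_def)
qed

lemma inner_matrix_vector_le:
  fixes H :: "real^'n^'m"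
  assumes "\<forall>w. norm (H *v w) \<le> k * norm w"
  shows "\<bar>p \<bullet> (H *v q)\<bar> \<le> k * norm p * norm q"
proof -
  have "\<bar>p \<bullet> (H *v q)\<bar> \<le> norm p * norm (H *v q)" by (rule Cauchy_Schwarz_ineq2)
  also have "\<dots> \<le> norm p * (k * norm q)" using assms by (simp add: mult_left_mono)
  finally show ?thesis by (simp add: algebra_simps)
qed

lemma tangential_component_bound:
  fixes H :: "real^'n^'n" and g u v :: "real^'n"
  assumes kH: "\<forall>w. norm (H *v w) \<le> k * norm w" and k: "0 \<le> k"
    and curv: "z * (norm u)\<^sup>2 \<le> u \<bullet> (H *v u)" and z: "0 < z"
    and orth: "u \<bullet> (H *v (u + v)) = - (g \<bullet> u)"
  shows "z * norm u \<le> norm g + k * norm v"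
proof -
  have "z * (norm u)\<^sup>2 \<le> - (g \<bullet> u) - u \<bullet> (H *v v)"
    using curv orth by (simp add: matrix_vector_right_distrib inner_add_right)
  also have "\<dots> \<le> norm g * norm u + k * norm u * norm v"
    using Cauchy_Schwarz_ineq2[of g u] inner_matrix_vector_le[OF kH, of u v] by linarith
  finally have "norm u * (z * norm u) \<le> norm u * (norm g + k * norm v)"
    by (simp add: power2_eq_square algebra_simps)
  then show ?thesis
    using k by (cases "u = 0") (simp_all add: mult_le_cancel_left_pos)
qed

(* The denominator of tau_trial in the merit parameter update. *)
abbreviation model_slope :: "real^'n \<Rightarrow> real^'n^'n \<Rightarrow> real^'n \<Rightarrow> real" where
  "model_slope g H d \<equiv> g \<bullet> d + max (d \<bullet> (H *v d)) 0"

lemma model_slope_bound: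
  fixes H :: "real^'n^'n" and g u v :: "real^'n"
  assumes kH: "\<forall>w. norm (H *v w) \<le> k * norm w" and k: "0 \<le> k"
    and curv: "0 \<le> u \<bullet> (H *v u)"
    and orth: "u \<bullet> (H *v (u + v)) = - (g \<bullet> u)"
  shows "model_slope g H (u + v) \<le> norm v * (norm g + k * (norm u + norm v))"
proof -
  let ?d = "u + v"
  have gv: "g \<bullet> v \<le> norm v * norm g"
    using Cauchy_Schwarz_ineq2[of g v] by (simp add: mult.commute)
  have uv: "k * norm u * norm v \<le> norm v * (k * (norm u + norm v))"
    using k by (simp add: algebra_simps)
  show ?thesis
  proof (cases "0 \<le> ?d \<bullet> (H *v ?d)")
    case True
    have "g \<bullet> ?d + ?d \<bullet> (H *v ?d) = g \<bullet> v + v \<bullet> (H *v ?d)"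
      using orth by (simp add: inner_add_left inner_add_right)
    also have "v \<bullet> (H *v ?d) \<le> k * norm v * norm ?d"
      using inner_matrix_vector_le[OF kH, of v ?d] by linarith
    also have "\<dots> \<le> norm v * (k * (norm u + norm v))"
      using k norm_triangle_ineq[of u v] by (simp add: mult_left_mono mult.assoc mult.left_commute)
    finally show ?thesis using True gv by (simp add: algebra_simps)
  next
    case False
    have "g \<bullet> ?d = - (u \<bullet> (H *v u)) - u \<bullet> (H *v v) + g \<bullet> v"
      using orth by (simp add: inner_add_right matrix_vector_right_distrib)
    also have "\<dots> \<le> k * norm u * norm v + g \<bullet> v"
      using curv inner_matrix_vector_le[OF kH, of u v] by linarith
    finally show ?thesis using False gv uv by (simp add: algebra_simps)
  qed
qed

lemma curvature_or_normal_dominates: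
  fixes H :: "real^'n^'n" and u v :: "real^'n"
  assumes kH: "\<forall>w. norm (H *v w) \<le> k * norm w" and k: "0 \<le> k"
    and curv: "z * (norm u)\<^sup>2 \<le> u \<bullet> (H *v u)" and z: "0 < z"
    and \<delta>: "0 < \<delta>" "\<delta> \<le> 1" "6 * k * \<delta> \<le> z"
  shows "(0 \<le> (u + v) \<bullet> (H *v (u + v)) \<and> z / 8 * (norm (u + v))\<^sup>2 \<le> (u + v) \<bullet> (H *v (u + v)))
    \<or> norm (u + v) \<le> (1 / \<delta> + 1) * norm v"
proof (cases "norm v \<le> \<delta> * norm u")
  case True
  let ?a = "norm u" and ?b = "norm v"
  have ab: "?a * ?b \<le> \<delta> * ?a\<^sup>2"
    using mult_left_mono[OF True norm_ge_zero[of u]]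
    by (simp add: power2_eq_square mult.left_commute)
  have ba: "?b \<le> ?a" using True \<delta> mult_left_le_one_le[of ?a \<delta>] by simp
  have "?b * ?b \<le> \<delta> * ?a\<^sup>2" using mult_right_mono[OF ba, of ?b] ab by simp
  have "(u + v) \<bullet> (H *v (u + v)) = u \<bullet> (H *v u) + u \<bullet> (H *v v) + v \<bullet> (H *v u) + v \<bullet> (H *v v)"
    by (simp add: inner_add_left inner_add_right matrix_vector_right_distrib)
  moreover have "\<bar>u \<bullet> (H *v v)\<bar> \<le> k * (\<delta> * ?a\<^sup>2)" "\<bar>v \<bullet> (H *v u)\<bar> \<le> k * (\<delta> * ?a\<^sup>2)"
    "\<bar>v \<bullet> (H *v v)\<bar> \<le> k * (\<delta> * ?a\<^sup>2)"
    using inner_matrix_vector_le[OF kH, of u v] inner_matrix_vector_le[OF kH, of v u]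
      inner_matrix_vector_le[OF kH, of v v] mult_left_mono[OF ab k]
      mult_left_mono[OF \<open>?b * ?b \<le> \<delta> * ?a\<^sup>2\<close> k]
    by (simp_all add: algebra_simps)
  moreover have "6 * (k * (\<delta> * ?a\<^sup>2)) \<le> z * ?a\<^sup>2"
    using mult_right_mono[OF \<delta>(3), of "?a\<^sup>2"] by (simp add: mult.assoc mult.left_commute)
  ultimately have dHd: "z / 2 * ?a\<^sup>2 \<le> (u + v) \<bullet> (H *v (u + v))"
    using curv by (simp add: abs_le_iff)
  have "norm (u + v) \<le> 2 * ?a" using norm_triangle_ineq[of u v] ba by linarith
  then have "(norm (u + v))\<^sup>2 \<le> 4 * ?a\<^sup>2" using power_mono[of "norm (u + v)" "2 * ?a" 2] by simp
  then have "z / 8 * (norm (u + v))\<^sup>2 \<le> z / 2 * ?a\<^sup>2" using z by simp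
  moreover have "0 \<le> z / 2 * ?a\<^sup>2" using z by simp
  ultimately show ?thesis using dHd by linarith
next
  case False
  then have "norm u \<le> norm v / \<delta>" using \<delta> by (simp add: field_simps)
  then show ?thesis using norm_triangle_ineq[of u v] \<delta> by (simp add: algebra_simps)
qed

lemma sqp_step_bounds:
  fixes J :: "real^'n^'m" and H :: "real^'n^'n" and g d :: "real^'n" and y c :: "real^'m"
  assumes kH: "\<forall>w. norm (H *v w) \<le> k * norm w" and k: "0 \<le> k"
    and curv: "\<forall>u. J *v u = 0 \<longrightarrow> z * (norm u)\<^sup>2 \<le> u \<bullet> (H *v u)" and z: "0 < z"
    and s: "0 < s" and sv: "\<forall>w. s * norm w \<le> norm (transpose J *v w)"
    and kkt: "H *v d + transpose J *v y = - g" "J *v d = - c"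
    and G: "norm g \<le> G" and C: "norm c \<le> C"
  defines "\<delta> \<equiv> min 1 (z / (6 * k + 1))"
  shows "model_slope g H d \<le> (G + k * ((G + k * C / s) / z + C / s)) / s * norm c"
    and "(0 \<le> d \<bullet> (H *v d) \<and> z / 8 * (norm d)\<^sup>2 \<le> d \<bullet> (H *v d))
      \<or> (norm d)\<^sup>2 \<le> ((1 / \<delta> + 1) / s)\<^sup>2 * (norm c)\<^sup>2"
proof -
  obtain v where Jv: "J *v v = - c" and sv_v: "s * norm v \<le> norm c"
    using matrix_min_norm_preimage[OF s sv, of "- c"] by auto
  define u where "u = d - v"
  have d: "d = u + v" by (simp add: u_def)
  have Ju: "J *v u = 0" using kkt(2) Jv by (simp add: u_def matrix_vector_mult_diff_distrib)
  have curv_u: "z * (norm u)\<^sup>2 \<le> u \<bullet> (H *v u)" using curv Ju by blast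
  have "H *v d = - g - transpose J *v y"
    using kkt(1) by (simp add: algebra_simps eq_neg_iff_add_eq_0)
  moreover have "u \<bullet> (transpose J *v y) = y \<bullet> (J *v u)"
    by (metis inner_commute transpose_matrix_vector dot_lmul_matrix)
  ultimately have orth: "u \<bullet> (H *v (u + v)) = - (g \<bullet> u)"
    using Ju by (simp add: d[symmetric] inner_diff_right inner_commute)
  have v: "norm v \<le> norm c / s" "norm c / s \<le> C / s"
    using sv_v C s by (simp_all add: pos_le_divide_eq mult.commute divide_right_mono)
  have "z * norm u \<le> norm g + k * norm v"
    using tangential_component_bound[OF kH k curv_u z orth] .
  also have "\<dots> \<le> G + k * C / s"
    using G v k mult_left_mono[of "norm v" "C / s" k] by simp
  finally have u: "norm u \<le> (G + k * C / s) / z" using z by (simp add: field_simps)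
  have "model_slope g H d \<le> norm v * (norm g + k * (norm u + norm v))"
    unfolding d using model_slope_bound[OF kH k order_trans[OF _ curv_u] orth] z by simp
  also have "\<dots> \<le> norm c / s * (G + k * ((G + k * C / s) / z + C / s))"
    using v u G k s by (intro mult_mono add_mono mult_left_mono) simp_all
  finally show "model_slope g H d \<le> (G + k * ((G + k * C / s) / z + C / s)) / s * norm c"
    by (simp add: field_simps)
  have \<delta>: "0 < \<delta>" "\<delta> \<le> 1" using z k by (simp_all add: \<delta>_def)
  have "\<delta> * (6 * k + 1) \<le> z"
    using k by (simp add: \<delta>_def flip: pos_le_divide_eq)
  then have \<delta>_small: "6 * k * \<delta> \<le> z" using \<delta> by (simp add: algebra_simps)
  have "norm d \<le> (1 / \<delta> + 1) * norm v \<Longrightarrow> (norm d)\<^sup>2 \<le> ((1 / \<delta> + 1) / s)\<^sup>2 * (norm c)\<^sup>2"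
  proof -
    assume "norm d \<le> (1 / \<delta> + 1) * norm v"
    also have "\<dots> \<le> (1 / \<delta> + 1) * (norm c / s)" using v \<delta> by (intro mult_left_mono) simp_all
    finally have "(norm d)\<^sup>2 \<le> ((1 / \<delta> + 1) / s * norm c)\<^sup>2" by (simp add: power_mono)
    then show ?thesis by (simp only: power_mult_distrib)
  qed
  then show "(0 \<le> d \<bullet> (H *v d) \<and> z / 8 * (norm d)\<^sup>2 \<le> d \<bullet> (H *v d))
      \<or> (norm d)\<^sup>2 \<le> ((1 / \<delta> + 1) / s)\<^sup>2 * (norm c)\<^sup>2"
    using curvature_or_normal_dominates[OF kH k curv_u z \<delta> \<delta>_small, of v] unfolding d by blast
qed

section \<open>Merit parameter and model reduction\<close>

lemma l1norm_nonneg: "0 \<le> l1norm v"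
  by (simp add: l1norm_def sum_nonneg)

lemma norm_le_l1norm: "norm v \<le> l1norm v"
  by (simp add: l1norm_def norm_le_l1_cart)

lemma tau_update_le:
  assumes "0 < tp" "0 \<le> eps" "sgm \<le> 1"
  shows "tau_update sgm eps tp cx g H d \<le> tp"
proof -
  define s where "s = model_slope g H d"
  define tr where "tr = (1 - sgm) * l1norm cx / s"
  have "(1 - eps) * tr \<le> tr" if "0 < s"
  proof -
    have "0 \<le> eps * tr" using assms that l1norm_nonneg[of cx] by (simp add: tr_def)
    then show ?thesis by (simp add: algebra_simps)
  qed
  then show ?thesis
    using assms unfolding tau_update_def Let_def s_def[symmetric] tr_def[symmetric] by auto
qed

lemma tau_update_mult_le:
  assumes "0 \<le> eps" "sgm \<le> 1" and s: "0 < model_slope g H d"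
  shows "tau_update sgm eps tp cx g H d * model_slope g H d \<le> (1 - sgm) * l1norm cx"
proof -
  define s where "s = model_slope g H d"
  define tr where "tr = (1 - sgm) * l1norm cx / s"
  have trs: "tr * s = (1 - sgm) * l1norm cx" using s by (simp add: tr_def s_def)
  have "0 \<le> tr * s" using trs assms l1norm_nonneg[of cx] by simp
  then have "(1 - eps) * tr * s \<le> tr * s" using assms by (simp add: algebra_simps)
  moreover have "tp * s \<le> tr * s" if "tp \<le> tr" using that s by (simp add: s_def mult_right_mono)
  ultimately show ?thesis
    using s trs unfolding tau_update_def Let_def s_def[symmetric] tr_def[symmetric] by auto
qed

lemma tau_update_ge:
  assumes tp: "0 < tp" and eps: "eps < 1" and sgm: "sgm < 1" and K: "0 \<le> K"
    and slope: "model_slope g H d \<le> K * l1norm cx"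
  shows "min tp ((1 - eps) * (1 - sgm) / (K + 1)) \<le> tau_update sgm eps tp cx g H d"
proof -
  define s where "s = model_slope g H d"
  define tr where "tr = (1 - sgm) * l1norm cx / s"
  have "(1 - eps) * (1 - sgm) / (K + 1) \<le> (1 - eps) * tr" if s0: "0 < s"
  proof -
    have "0 < K * l1norm cx" using s0 slope by (simp add: s_def)
    then have l: "0 < l1norm cx" using K by (simp add: zero_less_mult_iff)
    have "s \<le> (K + 1) * l1norm cx" using slope l by (simp add: s_def algebra_simps)
    then have "(1 - sgm) * l1norm cx / ((K + 1) * l1norm cx) \<le> tr"
      unfolding tr_def using s0 l sgm K by (intro divide_left_mono) simp_all
    from mult_left_mono[OF this, of "1 - eps"] show ?thesis using l eps by simp
  qed
  then show ?thesis
    using tp unfolding tau_update_def Let_def s_def[symmetric] tr_def[symmetric] by auto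
qed

lemma Delta_q_ge:
  assumes t: "0 \<le> t" and sgm: "sgm \<le> 1"
    and merit_param: "0 < model_slope g H d \<Longrightarrow>
      t * model_slope g H d \<le> (1 - sgm) * l1norm cx"
  shows "sgm * l1norm cx + t / 2 * max (d \<bullet> (H *v d)) 0 \<le> Delta_q cx t g H d"
proof (cases "0 < model_slope g H d")
  case True
  with merit_param show ?thesis by (simp add: Delta_q_def algebra_simps)
next
  case False
  then have "0 \<le> - t * model_slope g H d"
    using t by (simp add: mult_nonneg_nonpos)
  moreover have "sgm * l1norm cx \<le> l1norm cx"
    using mult_right_mono[OF sgm l1norm_nonneg[of cx]] by simp
  ultimately show ?thesis by (simp add: Delta_q_def algebra_simps)
qed

lemma Delta_q_ge_norm_sq:
  assumes dq: "sgm * l1norm cx + t / 2 * max (d \<bullet> (H *v d)) 0 \<le> Delta_q cx t g H d"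
    and t: "0 \<le> tmin" "tmin \<le> t" and z: "0 \<le> z" and sgm: "0 \<le> sgm"
      and M: "0 \<le> M" and C: "norm cx \<le> C"
    and dichotomy: "(0 \<le> d \<bullet> (H *v d) \<and> z / 8 * (norm d)\<^sup>2 \<le> d \<bullet> (H *v d))
      \<or> (norm d)\<^sup>2 \<le> M * (norm cx)\<^sup>2"
  shows "min (tmin * z / 16) (sgm / (M * C + 1)) * (norm d)\<^sup>2 \<le> Delta_q cx t g H d"
proof -
  have l: "0 \<le> sgm * l1norm cx" using sgm l1norm_nonneg[of cx] by simp
  have m: "0 \<le> t / 2 * max (d \<bullet> (H *v d)) 0" using t by simp
  from dichotomy show ?thesis
  proof
    assume curv: "0 \<le> d \<bullet> (H *v d) \<and> z / 8 * (norm d)\<^sup>2 \<le> d \<bullet> (H *v d)"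
    have "tmin * z / 16 * (norm d)\<^sup>2 = tmin / 2 * (z / 8 * (norm d)\<^sup>2)" by simp
    also have "\<dots> \<le> t / 2 * max (d \<bullet> (H *v d)) 0"
      using curv t z by (intro mult_mono) auto
    finally have "tmin * z / 16 * (norm d)\<^sup>2 \<le> t / 2 * max (d \<bullet> (H *v d)) 0" .
    moreover have "min (tmin * z / 16) (sgm / (M * C + 1)) * (norm d)\<^sup>2
      \<le> tmin * z / 16 * (norm d)\<^sup>2"
      by (intro mult_right_mono min.cobounded1) simp
    ultimately show ?thesis using dq l by linarith
  next
    assume normal: "(norm d)\<^sup>2 \<le> M * (norm cx)\<^sup>2"
    have C0: "0 \<le> C" using C norm_ge_zero order_trans by blast
    have "(norm cx)\<^sup>2 \<le> C * l1norm cx"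
      unfolding power2_eq_square using C norm_le_l1norm[of cx] C0 by (intro mult_mono) simp_all
    then have "(norm d)\<^sup>2 \<le> M * (C * l1norm cx)"
      using normal mult_left_mono[OF _ M] order_trans by blast
    also have "\<dots> \<le> (M * C + 1) * l1norm cx"
      using l1norm_nonneg[of cx] by (simp add: algebra_simps)
    finally have "sgm / (M * C + 1) * (norm d)\<^sup>2 \<le> sgm / (M * C + 1) * ((M * C + 1) * l1norm cx)"
      using sgm M C0 by (intro mult_left_mono) simp_all
    also have "\<dots> = sgm * l1norm cx"
      using mult_nonneg_nonneg[OF M C0] by (simp add: add_nonneg_pos)
    finally have "sgm / (M * C + 1) * (norm d)\<^sup>2 \<le> sgm * l1norm cx" .
    moreover have "min (tmin * z / 16) (sgm / (M * C + 1)) * (norm d)\<^sup>2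
      \<le> sgm / (M * C + 1) * (norm d)\<^sup>2"
      by (intro mult_right_mono min.cobounded2) simp
    ultimately show ?thesis using dq m by linarith
  qed
qed

lemma common_iterationD:
  assumes "common_iteration f gf c Jc tau_m1 sgm eps x H d y tau alpha"
  shows "H k *v d k + transpose (Jc (x k)) *v y k = - gf (x k)"
    and "Jc (x k) *v d k = - c (x k)"
    and "tau k = tau_update sgm eps (if k = 0 then tau_m1 else tau (k - 1))
      (c (x k)) (gf (x k)) (H k) (d k)"
  using assms unfolding common_iteration_def by auto

lemma common_iteration_step_nonzero:
  assumes iter: "common_iteration f gf c Jc tau_m1 sgm eps x H d y tau alpha"
    and no_stop: "\<not> (gf (x k) + transpose (Jc (x k)) *v y k = 0 \<and> c (x k) = 0)"
  shows "d k \<noteq> 0"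
  using common_iterationD(1,2)[OF iter, of k] no_stop
  by (auto simp: eq_neg_iff_add_eq_0 add.commute)

lemma common_iteration_tau_bounds:
  assumes iter: "common_iteration f gf c Jc tau_m1 sgm eps x H d y tau alpha"
    and tau_m1: "0 < tau_m1" and eps: "0 \<le> eps" "eps < 1" and sgm: "sgm < 1" and K: "0 \<le> K"
    and slope: "\<And>k. model_slope (gf (x k)) (H k) (d k) \<le> K * l1norm (c (x k))"
  shows "min tau_m1 ((1 - eps) * (1 - sgm) / (K + 1)) \<le> tau k \<and> tau k \<le> tau_m1"
proof (induction k)
  case 0
  show ?case
    using tau_update_ge[OF tau_m1 eps(2) sgm K slope[of 0]]
      tau_update_le[OF tau_m1 eps(1) less_imp_le[OF sgm]]
      common_iterationD(3)[OF iter, of 0]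
    by simp
next
  case (Suc k)
  have "0 < min tau_m1 ((1 - eps) * (1 - sgm) / (K + 1))" using tau_m1 eps sgm K by simp
  then have tau_k: "0 < tau k" using Suc by linarith
  have "tau (Suc k) =
      tau_update sgm eps (tau k) (c (x (Suc k))) (gf (x (Suc k))) (H (Suc k)) (d (Suc k))"
    using common_iterationD(3)[OF iter, of "Suc k"] by simp
  then have "min (tau k) ((1 - eps) * (1 - sgm) / (K + 1)) \<le> tau (Suc k)" "tau (Suc k) \<le> tau k"
    using tau_update_ge[OF tau_k eps(2) sgm K slope[of "Suc k"]]
      tau_update_le[OF tau_k eps(1) less_imp_le[OF sgm]] by simp_all
  with Suc show ?case by (auto simp: min_def split: if_splits)
qed

lemma common_iteration_uniform_decrease:
  assumes iter: "common_iteration f gf c Jc tau_m1 sgm eps x H d y tau alpha"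
    and kH: "\<And>k. \<forall>u. norm (H k *v u) \<le> kappaH * norm u" and kappaH: "0 \<le> kappaH"
    and curv: "\<And>k. \<forall>u. Jc (x k) *v u = 0 \<longrightarrow> zeta * (norm u)\<^sup>2 \<le> u \<bullet> (H k *v u)"
    and zeta: "0 < zeta"
    and s: "0 < s" and sv: "\<And>k. \<forall>v. s * norm v \<le> norm (transpose (Jc (x k)) *v v)"
    and G: "\<And>k. norm (gf (x k)) \<le> G" and C: "\<And>k. norm (c (x k)) \<le> C"
    and tau_m1: "0 < tau_m1" and sgm: "0 < sgm" "sgm < 1" and eps: "0 < eps" "eps < 1"
  obtains tmin kq where "0 < tmin" "0 < kq" "\<And>k. tmin \<le> tau k" "\<And>k. tau k \<le> tau_m1"
    and "\<And>k. kq * (norm (d k))\<^sup>2 \<le> Delta_q (c (x k)) (tau k) (gf (x k)) (H k) (d k)"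
proof -
  define K where "K = (G + kappaH * ((G + kappaH * C / s) / zeta + C / s)) / s"
  define M where "M = ((1 / min 1 (zeta / (6 * kappaH + 1)) + 1) / s)\<^sup>2"
  define tmin where "tmin = min tau_m1 ((1 - eps) * (1 - sgm) / (K + 1))"
  define kq where "kq = min (tmin * zeta / 16) (sgm / (M * C + 1))"
  note step = sqp_step_bounds[OF kH kappaH curv zeta s sv common_iterationD(1,2)[OF iter] G C]
  have G0: "0 \<le> G" and C0: "0 \<le> C" using G[of 0] C[of 0] norm_ge_zero order_trans by blast+
  have K: "0 \<le> K" unfolding K_def using G0 C0 kappaH zeta s by simp
  have M: "0 \<le> M" unfolding M_def by simp
  have slope: "model_slope (gf (x k)) (H k) (d k) \<le> K * l1norm (c (x k))" for k
    using step(1)[of k] mult_left_mono[OF norm_le_l1norm K, of "c (x k)"] unfolding K_def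
    by linarith
  have tau: "tmin \<le> tau k \<and> tau k \<le> tau_m1" for k
    using common_iteration_tau_bounds[OF iter tau_m1 _ eps(2) sgm(2) K slope] eps
    unfolding tmin_def by simp
  have tmin: "0 < tmin" unfolding tmin_def using tau_m1 eps sgm K by simp
  have decrease: "kq * (norm (d k))\<^sup>2 \<le> Delta_q (c (x k)) (tau k) (gf (x k)) (H k) (d k)" for k
  proof -
    have "sgm * l1norm (c (x k)) + tau k / 2 * max (d k \<bullet> (H k *v d k)) 0
      \<le> Delta_q (c (x k)) (tau k) (gf (x k)) (H k) (d k)"
      using tau[of k] tmin sgm eps
      by (intro Delta_q_ge) (simp_all add: common_iterationD(3)[OF iter, of k] tau_update_mult_le)
    from Delta_q_ge_norm_sq[OF this _ _ _ _ _ C step(2)[folded M_def]] show ?thesis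
      using tau[of k] tmin zeta sgm unfolding kq_def M_def by simp
  qed
  have "0 < M * C + 1" using mult_nonneg_nonneg[OF M C0] by linarith
  then have "0 < kq" unfolding kq_def using tmin zeta sgm by simp
  with tmin tau decrease show thesis by (blast intro: that)
qed

section \<open>Stepsize rules\<close>

lemma backtracking_parameter_bounded:
  fixes Lk :: "nat \<Rightarrow> nat \<Rightarrow> real" and jacc :: "nat \<Rightarrow> nat" and P :: "nat \<Rightarrow> nat \<Rightarrow> bool"
  assumes init: "0 < Lk 0 0" "Lk 0 0 \<le> L0"
    and restart: "\<And>k. 0 < Lk (Suc k) 0 \<and> Lk (Suc k) 0 \<le> Lk k (jacc k)"
    and update: "\<And>k j. j < jacc k \<Longrightarrow> Lk k (Suc j) = (if P k j then Lk k j else rho * Lk k j)"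
    and sufficient: "\<And>k j. j < jacc k \<Longrightarrow> L \<le> Lk k j \<Longrightarrow> P k j"
    and rho: "1 < rho"
  shows "j \<le> jacc k \<Longrightarrow> 0 < Lk k j \<and> Lk k j \<le> max L0 (rho * L)"
proof -
  let ?M = "max L0 (rho * L)"
  have inner: "0 < Lk k j \<and> Lk k j \<le> ?M" if "0 < Lk k 0" "Lk k 0 \<le> ?M" "j \<le> jacc k" for k j
    using that(3)
  proof (induction j)
    case (Suc j)
    then have j: "j < jacc k" and IH: "0 < Lk k j" "Lk k j \<le> ?M" by auto
    show ?case
    proof (cases "P k j")
      case False
      then have "Lk k j < L" using sufficient j by force
      then have "rho * Lk k j \<le> ?M" using rho by (intro max.coboundedI2) simp
      moreover have "Lk k (Suc j) = rho * Lk k j" using update[OF j] False by simp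
      ultimately show ?thesis using IH rho by simp
    qed (use update[OF j] IH in simp)
  qed (use that in simp)
  have "0 < Lk k 0 \<and> Lk k 0 \<le> ?M" for k
  proof (induction k)
    case (Suc k)
    then show ?case using inner[of k "jacc k"] restart[of k] by auto
  qed (use init in simp)
  then show "j \<le> jacc k \<Longrightarrow> 0 < Lk k j \<and> Lk k j \<le> ?M" using inner by blast
qed

(* Each branch of alg1_step is either alpha-hat or at least 1. *)
lemma alg1_step_ge:
  assumes eta: "eta < 1" and Lam: "0 < Lam" "Lam \<le> Lmax" and nd2: "0 < nd2"
    and kq: "0 < kq" "kq * nd2 \<le> dq"
  shows "min 1 (2 * (1 - eta) * kq / Lmax) \<le> alg1_step eta dq c1 Lam nd2"
proof -
  define ah where "ah = 2 * (1 - eta) * dq / (Lam * nd2)"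
  have "2 * (1 - eta) * kq / Lmax = 2 * (1 - eta) * (kq * nd2) / (Lmax * nd2)" using nd2 by simp
  also have "\<dots> \<le> 2 * (1 - eta) * dq / (Lmax * nd2)"
    using kq eta Lam nd2 by (intro divide_right_mono mult_left_mono) simp_all
  also have "\<dots> \<le> ah"
    unfolding ah_def using kq eta Lam nd2
    by (intro divide_left_mono mult_nonneg_nonneg mult_right_mono)
      (simp_all add: order_trans[OF _ kq(2)])
  finally have "2 * (1 - eta) * kq / Lmax \<le> ah" .
  then show ?thesis
    unfolding alg1_step_def Let_def ah_def[symmetric] by (auto simp: min_le_iff_disj)
qed

lemma backtracking_stepsize_ge:
  fixes SD :: "real \<Rightarrow> bool" and feasible :: "real \<Rightarrow> bool"
  assumes nu: "0 < nu" "nu < 1" and abar: "0 < abar"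
    and rejected: "\<forall>i < j. \<not> SD (nu ^ i * abar)"
    and trial_feasible: "\<forall>i \<le> j. feasible (nu ^ i * abar)"
    and small_accepted: "\<And>a. 0 < a \<Longrightarrow> a \<le> a0 \<Longrightarrow> feasible a \<Longrightarrow> SD a"
  shows "min abar (nu * a0) \<le> nu ^ j * abar"
proof (cases j)
  case (Suc i)
  have "\<not> SD (nu ^ i * abar)" "feasible (nu ^ i * abar)" "0 < nu ^ i * abar"
    using rejected trial_feasible nu abar Suc by simp_all
  then have "a0 < nu ^ i * abar" using small_accepted by force
  then have "nu * a0 \<le> nu * (nu ^ i * abar)" using nu by simp
  then show ?thesis using Suc by (simp add: min_le_iff_disj mult.assoc)
qed simp

locale smooth_constrained_problem =
  fixes f :: "real^'n \<Rightarrow> real" and gf :: "real^'n \<Rightarrow> real^'n"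
    and c :: "real^'n \<Rightarrow> real^'m" and Jc :: "real^'n \<Rightarrow> real^'n^'m"
    and X :: "(real^'n) set" and Lf :: real and gam :: "'m \<Rightarrow> real"
  assumes open_domain: "open X" and convex_domain: "convex X"
    and f_has_derivative: "\<forall>z\<in>X. (f has_derivative (\<lambda>h. gf z \<bullet> h)) (at z)"
    and gradient_lipschitz: "Lf-lipschitz_on X gf"
    and c_has_derivative: "\<forall>z\<in>X. (c has_derivative (\<lambda>h. Jc z *v h)) (at z)"
    and constraint_gradient_lipschitz: "\<forall>i. (gam i)-lipschitz_on X (\<lambda>z. Jc z $ i)"
begin

lemma LF_cond_if_Lipschitz_le:
  assumes "x \<in> X" "x + a *\<^sub>R d \<in> X" and "Lf \<le> L"
  shows "LF_cond f gf x d L a"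
proof -
  have "(1/2) * Lf * a\<^sup>2 * (norm d)\<^sup>2 \<le> (1/2) * L * a\<^sup>2 * (norm d)\<^sup>2"
    using assms(3) by (intro mult_right_mono) simp_all
  then show ?thesis
    using lipschitz_gradient_step_bounds(1)[OF convex_domain open_domain f_has_derivative
        gradient_lipschitz assms(1,2)]
    unfolding LF_cond_def by linarith
qed

lemma constraint_step_bound:
  assumes "x \<in> X" "x + a *\<^sub>R d \<in> X"
  shows "\<bar>c (x + a *\<^sub>R d) $ i\<bar> \<le> \<bar>c x $ i + a * (Jc x $ i \<bullet> d)\<bar> + (1/2) * gam i * a\<^sup>2 * (norm d)\<^sup>2"
proof -
  have "\<forall>z\<in>X. ((\<lambda>z. c z $ i) has_derivative (\<lambda>h. Jc z $ i \<bullet> h)) (at z)"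
    using c_has_derivative has_derivative_component_matrix_vector by blast
  from lipschitz_gradient_step_bounds(2)[OF convex_domain open_domain this
      constraint_gradient_lipschitz[rule_format] assms]
  show ?thesis by simp
qed

lemma LC_cond_if_Lipschitz_le:
  assumes "x \<in> X" "x + a *\<^sub>R d \<in> X" and "gam i \<le> g"
  shows "LC_cond c Jc x d i g a"
proof -
  have "(1/2) * gam i * a\<^sup>2 * (norm d)\<^sup>2 \<le> (1/2) * g * a\<^sup>2 * (norm d)\<^sup>2"
    using assms(3) by (intro mult_right_mono) simp_all
  then show ?thesis
    using constraint_step_bound[OF assms(1,2), of i] unfolding LC_cond_def by linarith
qed

lemma l1norm_constraint_step_le:
  assumes x: "x \<in> X" "x + a *\<^sub>R d \<in> X" and Jd: "Jc x *v d = - c x" and a: "0 \<le> a" "a \<le> 1"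
  shows "l1norm (c (x + a *\<^sub>R d)) \<le> (1 - a) * l1norm (c x)
    + (1/2) * (\<Sum>i\<in>UNIV. gam i) * a\<^sup>2 * (norm d)\<^sup>2"
proof -
  have "\<bar>c (x + a *\<^sub>R d) $ i\<bar> \<le> (1 - a) * \<bar>c x $ i\<bar> + (1/2) * gam i * a\<^sup>2 * (norm d)\<^sup>2" for i
  proof -
    have "Jc x $ i \<bullet> d = - (c x $ i)"
      using Jd by (metis matrix_vector_mul_component vector_uminus_component)
    then have "c x $ i + a * (Jc x $ i \<bullet> d) = (1 - a) * c x $ i" by (simp add: algebra_simps)
    then have "\<bar>c x $ i + a * (Jc x $ i \<bullet> d)\<bar> = (1 - a) * \<bar>c x $ i\<bar>"
      using a by (simp add: abs_mult)
    with constraint_step_bound[OF x, of i] show ?thesis by simp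
  qed
  then have "l1norm (c (x + a *\<^sub>R d)) \<le>
    (\<Sum>i\<in>UNIV. (1 - a) * \<bar>c x $ i\<bar> + (1/2) * gam i * a\<^sup>2 * (norm d)\<^sup>2)"
    unfolding l1norm_def by (rule sum_mono)
  also have "\<dots> = (1 - a) * l1norm (c x) + (1/2) * (\<Sum>i\<in>UNIV. gam i) * a\<^sup>2 * (norm d)\<^sup>2"
    unfolding l1norm_def by (simp add: sum.distrib sum_distrib_left sum_distrib_right)
  finally show ?thesis .
qed

lemma merit_descent:
  assumes x: "x \<in> X" "x + a *\<^sub>R d \<in> X" and Jd: "Jc x *v d = - c x"
    and a: "0 \<le> a" "a \<le> 1" and t: "0 \<le> t"
  shows "merit f c (x + a *\<^sub>R d) t \<le> merit f c x t - a * Delta_q (c x) t (gf x) H d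
    + (1/2) * (t * Lf + (\<Sum>i\<in>UNIV. gam i)) * a\<^sup>2 * (norm d)\<^sup>2"
proof -
  have "t * f (x + a *\<^sub>R d) \<le> t * (f x + a * (gf x \<bullet> d) + (1/2) * Lf * a\<^sup>2 * (norm d)\<^sup>2)"
    using lipschitz_gradient_step_bounds(1)[OF convex_domain open_domain f_has_derivative
        gradient_lipschitz x] t by (rule mult_left_mono)
  moreover have "0 \<le> a * t * max (d \<bullet> (H *v d)) 0" using a t by simp
  ultimately show ?thesis
    using l1norm_constraint_step_le[OF x Jd a]
    unfolding merit_def Delta_q_def by (simp add: algebra_simps)
qed

lemma SD_cond_if_small_step:
  assumes x: "x \<in> X" "x + a *\<^sub>R d \<in> X" and Jd: "Jc x *v d = - c x"
    and a: "0 \<le> a" "a \<le> 1" and t: "0 \<le> t" and eta: "eta \<le> 1"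
    and decrease: "kq * (norm d)\<^sup>2 \<le> Delta_q (c x) t (gf x) H d"
    and small: "(t * Lf + (\<Sum>i\<in>UNIV. gam i)) * a \<le> 2 * (1 - eta) * kq"
  shows "SD_cond f gf c eta x d H t a"
proof -
  let ?\<Lambda> = "t * Lf + (\<Sum>i\<in>UNIV. gam i)" and ?dq = "Delta_q (c x) t (gf x) H d"
  have "?\<Lambda> * a * (norm d)\<^sup>2 \<le> 2 * (1 - eta) * (kq * (norm d)\<^sup>2)"
    using mult_right_mono[OF small, of "(norm d)\<^sup>2"] by (simp add: mult.assoc)
  also have "\<dots> \<le> 2 * (1 - eta) * ?dq"
    using decrease eta by (intro mult_left_mono) simp_all
  finally have "a / 2 * (?\<Lambda> * a * (norm d)\<^sup>2) \<le> a / 2 * (2 * (1 - eta) * ?dq)"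
    using a by (intro mult_left_mono) simp_all
  then show ?thesis
    using merit_descent[OF x Jd a t, of H] unfolding SD_cond_def
    by (simp add: power2_eq_square algebra_simps)
qed

lemma alg2_stepsize_bounded_below:
  assumes run: "alg2_run f gf c X eta x H d tau alpha"
    and x: "\<And>k. x k \<in> X" and Jd: "\<And>k. Jc (x k) *v d k = - c (x k)"
    and tau: "\<And>k. 0 < tau k" "\<And>k. tau k \<le> tau_max" and eta: "eta < 1" and kq: "0 < kq"
    and decrease: "\<And>k. kq * (norm (d k))\<^sup>2 \<le> Delta_q (c (x k)) (tau k) (gf (x k)) (H k) (d k)"
  shows "\<exists>amin>0. \<forall>k. amin \<le> alpha k"
proof -
  obtain nu abar jacc where nu: "0 < nu" "nu < 1" and abar: "0 < abar"
    and steps: "\<And>k. alpha k = nu ^ jacc k * abar"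
    and rejected: "\<And>k. \<forall>j < jacc k. \<not> SD_cond f gf c eta (x k) (d k) (H k) (tau k) (nu ^ j * abar)"
    and trials_in_X: "\<And>k. \<forall>j \<le> jacc k. x k + (nu ^ j * abar) *\<^sub>R d k \<in> X"
    using run unfolding alg2_run_def by blast
  have Lf: "0 \<le> Lf" and gam: "0 \<le> (\<Sum>i\<in>UNIV. gam i)"
    using gradient_lipschitz constraint_gradient_lipschitz
      by (auto simp: lipschitz_on_def intro: sum_nonneg)
  define \<Lambda> where "\<Lambda> = tau_max * Lf + (\<Sum>i\<in>UNIV. gam i) + 1"
  define a0 where "a0 = min 1 (2 * (1 - eta) * kq / \<Lambda>)"
  have "0 \<le> tau_max" using tau[of 0] by linarith
  then have \<Lambda>: "0 < \<Lambda>" unfolding \<Lambda>_def using mult_nonneg_nonneg[of tau_max Lf] Lf gam by linarith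
  have small_accepted: "SD_cond f gf c eta (x k) (d k) (H k) (tau k) a"
    if a: "0 < a" "a \<le> a0" and feasible: "x k + a *\<^sub>R d k \<in> X" for k a
  proof (rule SD_cond_if_small_step[OF x feasible Jd _ _ _ _ decrease])
    have "tau k * Lf + (\<Sum>i\<in>UNIV. gam i) \<le> \<Lambda>"
      unfolding \<Lambda>_def using mult_right_mono[OF tau(2)[of k] Lf] by linarith
    then have "(tau k * Lf + (\<Sum>i\<in>UNIV. gam i)) * a \<le> \<Lambda> * a0"
      using a \<Lambda> by (intro mult_mono) simp_all
    also have "\<dots> \<le> \<Lambda> * (2 * (1 - eta) * kq / \<Lambda>)"
      using \<Lambda> unfolding a0_def by (intro mult_left_mono) simp_all
    also have "\<dots> = 2 * (1 - eta) * kq" using \<Lambda> by simp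
    finally show "(tau k * Lf + (\<Sum>i\<in>UNIV. gam i)) * a \<le> 2 * (1 - eta) * kq" .
  qed (use a tau[of k] eta in \<open>simp_all add: a0_def\<close>)
  have "min abar (nu * a0) \<le> alpha k" for k
    using backtracking_stepsize_ge[where SD = "SD_cond f gf c eta (x k) (d k) (H k) (tau k)"
        and feasible = "\<lambda>a. x k + a *\<^sub>R d k \<in> X", OF nu abar rejected trials_in_X small_accepted]
    by (simp add: steps)
  moreover have "0 < min abar (nu * a0)" using abar nu \<Lambda> kq eta by (simp add: a0_def)
  ultimately show ?thesis by blast
qed

lemma alg1_stepsize_bounded_below:
  assumes run: "alg1_run f gf c Jc X eta x H d tau alpha"
    and x: "\<And>k. x k \<in> X" and tau: "\<And>k. 0 < tau k" "\<And>k. tau k \<le> tau_max"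
    and eta: "eta < 1" and kq: "0 < kq"
    and decrease: "\<And>k. kq * (norm (d k))\<^sup>2 \<le> Delta_q (c (x k)) (tau k) (gf (x k)) (H k) (d k)"
    and d: "\<And>k. d k \<noteq> 0"
  shows "\<exists>amin>0. \<forall>k. amin \<le> alpha k"
proof -
  define trial where "trial Lk Gk k j =
      alg1_step eta (Delta_q (c (x k)) (tau k) (gf (x k)) (H k) (d k)) (l1norm (c (x k)))
        (tau k * Lk k j + (\<Sum>i\<in>UNIV. Gk k j $ i)) ((norm (d k))\<^sup>2)"
    for Lk :: "nat \<Rightarrow> nat \<Rightarrow> real" and Gk :: "nat \<Rightarrow> nat \<Rightarrow> real^'m" and k j
  obtain rho L_m1 gam_m1 Lk Gk jacc where rho: "1 < rho"
    and L_init: "0 < Lk 0 0" "Lk 0 0 \<le> L_m1"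
    and G_init: "\<And>i. 0 < Gk 0 0 $ i \<and> Gk 0 0 $ i \<le> gam_m1 $ i"
    and L_restart: "\<And>k. 0 < Lk (Suc k) 0 \<and> Lk (Suc k) 0 \<le> Lk k (jacc k)"
    and G_restart: "\<And>k i. 0 < Gk (Suc k) 0 $ i \<and> Gk (Suc k) 0 $ i \<le> Gk k (jacc k) $ i"
    and L_update: "\<And>k j. j < jacc k \<Longrightarrow> Lk k (Suc j) =
      (if LF_cond f gf (x k) (d k) (Lk k j) (trial Lk Gk k j) then Lk k j else rho * Lk k j)"
    and G_update: "\<And>k j i. j < jacc k \<Longrightarrow> Gk k (Suc j) $ i =
      (if LC_cond c Jc (x k) (d k) i (Gk k j $ i) (trial Lk Gk k j)
        then Gk k j $ i else rho * Gk k j $ i)"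
    and accepted: "\<And>k. alpha k = trial Lk Gk k (jacc k)"
    and trials_in_X: "\<And>k j. j \<le> jacc k \<Longrightarrow> x k + trial Lk Gk k j *\<^sub>R d k \<in> X"
    using run unfolding alg1_run_def Let_def trial_def[symmetric]
    by (elim exE conjE) (rule that; blast)
  define Lmax where "Lmax = max L_m1 (rho * Lf)"
  define Gmax where "Gmax i = max (gam_m1 $ i) (rho * gam i)" for i
  have L_bound: "0 < Lk k j \<and> Lk k j \<le> Lmax" if "j \<le> jacc k" for k j
    unfolding Lmax_def
    by (rule backtracking_parameter_bounded[OF L_init L_restart L_update _ rho that])
      (use LF_cond_if_Lipschitz_le x trials_in_X in auto)
  have G_bound: "0 < Gk k j $ i \<and> Gk k j $ i \<le> Gmax i" if "j \<le> jacc k" for k j i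
    unfolding Gmax_def
    by (rule backtracking_parameter_bounded[where Lk = "\<lambda>k j. Gk k j $ i",
      OF _ _ G_restart G_update _ rho that])
      (use G_init LC_cond_if_Lipschitz_le x trials_in_X in auto)
  define \<Lambda> where "\<Lambda> = tau_max * Lmax + (\<Sum>i\<in>UNIV. Gmax i)"
  have \<Lambda>: "0 < tau k * Lk k (jacc k) + (\<Sum>i\<in>UNIV. Gk k (jacc k) $ i)"
    "tau k * Lk k (jacc k) + (\<Sum>i\<in>UNIV. Gk k (jacc k) $ i) \<le> \<Lambda>" for k
  proof -
    have "0 < tau k * Lk k (jacc k)" using tau L_bound by simp
    moreover have "0 \<le> (\<Sum>i\<in>UNIV. Gk k (jacc k) $ i)"
      using G_bound by (simp add: sum_nonneg less_imp_le)
    ultimately show "0 < tau k * Lk k (jacc k) + (\<Sum>i\<in>UNIV. Gk k (jacc k) $ i)" by linarith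
    have "tau k * Lk k (jacc k) \<le> tau_max * Lmax"
      using tau(1,2)[of k] L_bound[of "jacc k" k] by (intro mult_mono) auto
    moreover have "(\<Sum>i\<in>UNIV. Gk k (jacc k) $ i) \<le> (\<Sum>i\<in>UNIV. Gmax i)"
      using G_bound by (intro sum_mono) simp
    ultimately show "tau k * Lk k (jacc k) + (\<Sum>i\<in>UNIV. Gk k (jacc k) $ i) \<le> \<Lambda>"
      unfolding \<Lambda>_def by linarith
  qed
  have "min 1 (2 * (1 - eta) * kq / \<Lambda>) \<le> alpha k" for k
    using alg1_step_ge[OF eta \<Lambda>[of k] _ kq decrease] d by (simp add: accepted trial_def)
  moreover have "0 < min 1 (2 * (1 - eta) * kq / \<Lambda>)" using \<Lambda>(1)[of 0] \<Lambda>(2)[of 0] eta kq by simp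
  ultimately show ?thesis by blast
qed

end

theorem lemma2p17:
  fixes f :: "real^'n \<Rightarrow> real" and gf :: "real^'n \<Rightarrow> real^'n"
    and c :: "real^'n \<Rightarrow> real^'m" and Jc :: "real^'n \<Rightarrow> real^'n^'m"
    and X :: "(real^'n) set"
    and Lf :: real and gam :: "'m \<Rightarrow> real" and kappaH zeta :: real
    and tau_m1 sgm eps eta :: real
    and x d :: "nat \<Rightarrow> real^'n" and y :: "nat \<Rightarrow> real^'m" and H :: "nat \<Rightarrow> real^'n^'n"
    and tau alpha :: "nat \<Rightarrow> real"
  assumes
    \<comment> \<open>Standing Assumption\<close>
    X_open: "open X" and X_convex: "convex X" and iter_in_X: "\<forall>k. x k \<in> X"
    and f_deriv: "\<forall>z\<in>X. (f has_derivative (\<lambda>h. gf z \<bullet> h)) (at z)"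
    and gf_cont: "continuous_on X gf"
    and f_bdd_below: "\<exists>flow. \<forall>z\<in>X. flow \<le> f z"
    and gf_bdd: "bounded (gf ` X)"
    and gf_lip: "Lf-lipschitz_on X gf"
    and c_deriv: "\<forall>z\<in>X. (c has_derivative (\<lambda>h. Jc z *v h)) (at z)"
    and c_bdd: "bounded (c ` X)" and Jc_bdd: "bounded (Jc ` X)"
    and gradc_lip: "\<forall>i. (gam i)-lipschitz_on X (\<lambda>z. Jc z $ i)"
    and sing_vals: "\<exists>s>0. \<forall>z\<in>X. \<forall>v. s * norm v \<le> norm (transpose (Jc z) *v v)"
    \<comment> \<open>Matrix Assumption\<close>
    and H_sym: "\<forall>k. transpose (H k) = H k"
    and H_bdd: "\<forall>k. onorm (\<lambda>u. H k *v u) \<le> kappaH"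
    and zeta_pos: "0 < zeta"
    and H_curv: "\<forall>k u. Jc (x k) *v u = 0 \<longrightarrow> zeta * (norm u)\<^sup>2 \<le> u \<bullet> (H k *v u)"
    \<comment> \<open>parameters and common iteration\<close>
    and tau_m1_pos: "0 < tau_m1" and sgm: "0 < sgm" "sgm < 1"
    and eps: "0 < eps" "eps < 1" and eta: "0 < eta" "eta < 1"
    and iteration: "common_iteration f gf c Jc tau_m1 sgm eps x H d y tau alpha"
    \<comment> \<open>no finite termination\<close>
    and no_stop: "\<forall>k. \<not> (gf (x k) + transpose (Jc (x k)) *v y k = 0 \<and> c (x k) = 0)"
    \<comment> \<open>stepsizes generated by Algorithm 1 or Algorithm 2\<close>
    and alg: "alg1_run f gf c Jc X eta x H d tau alpha \<or> alg2_run f gf c X eta x H d tau alpha"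
  shows "\<exists>alpha_min > 0. \<forall>k. alpha_min \<le> alpha k"
proof -
  interpret smooth_constrained_problem f gf c Jc X Lf gam
    using X_open X_convex f_deriv gf_lip c_deriv gradc_lip by unfold_locales
  obtain s where s: "0 < s" and sv: "\<forall>z\<in>X. \<forall>v. s * norm v \<le> norm (transpose (Jc z) *v v)"
    using sing_vals by blast
  obtain G where G: "\<forall>z\<in>X. norm (gf z) \<le> G" using gf_bdd unfolding bounded_iff by blast
  obtain C where C: "\<forall>z\<in>X. norm (c z) \<le> C" using c_bdd unfolding bounded_iff by blast
  have kappaH: "0 \<le> kappaH"
    using onorm_pos_le[OF matrix_vector_mul_bounded_linear] H_bdd order_trans by blast
  have kH: "\<forall>u. norm (H k *v u) \<le> kappaH * norm u" for k
    using onorm[OF matrix_vector_mul_bounded_linear, of "H k"] H_bdd mult_right_mono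
    by (meson norm_ge_zero order_trans)
  obtain tmin kq where "0 < tmin" "0 < kq" and tau: "\<And>k. tmin \<le> tau k" "\<And>k. tau k \<le> tau_m1"
    and decrease: "\<And>k. kq * (norm (d k))\<^sup>2 \<le> Delta_q (c (x k)) (tau k) (gf (x k)) (H k) (d k)"
    using common_iteration_uniform_decrease[OF iteration kH kappaH _ zeta_pos s _ _ _ tau_m1_pos
        sgm eps] H_curv sv G C iter_in_X by blast
  then have tau_pos: "\<And>k. 0 < tau k" using less_le_trans by blast
  from alg show ?thesis
  proof
    assume "alg1_run f gf c Jc X eta x H d tau alpha"
    from alg1_stepsize_bounded_below[OF this _ tau_pos tau(2) eta(2) \<open>0 < kq\<close> decrease]
    show ?thesis using iter_in_X common_iteration_step_nonzero[OF iteration] no_stop by blast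
  next
    assume "alg2_run f gf c X eta x H d tau alpha"
    from alg2_stepsize_bounded_below[OF this _ _ tau_pos tau(2) eta(2) \<open>0 < kq\<close> decrease]
    show ?thesis using iter_in_X common_iterationD(2)[OF iteration] by blast
  qed
qed

end
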